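(* For every positive integer $n$, the polynomial in $q$ $$\binom{2n}{n}_q\;-\;\prod_{i=1}^{n}\bigl(1+q^{2i-1}\bigr)\;=\;\sum_{k=0}^{n^2}\bigl(p_k(n,n)-b_k(n)\bigr)q^k$$ is symmetric and unimodal, i.e. its coefficients $c_k=p_k(n,n)-b_k(n)$ satisfy $c_k=c_{n^2-k}$ and $c_0\le c_1\le\cdots\le c_{\lfloor n^2/2\rfloor}\ge\cdots\ge c_{n^2}$.
   Context: $\binom{2n}{n}_q=\prod_{i=1}^{n}\frac{q^{n+i}-1}{q^i-1}$ is the Gaussian ($q$-binomial) coefficient, and $p_k(n,n)$ is the number of partitions of $k$ fitting inside an $n\times n$ square, so that $\binom{2n}{n}_q=\sum_k p_k(n,n)q^k$. $b_k(n)$ is the number of partitions of $k$ into distinct odd parts each at most $2n-1$, so that $\prod_{i=1}^n(1+q^{2i-1})=\sum_k b_k(n)q^k$. *)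

theory Defs
  imports "HOL-Computational_Algebra.Polynomial"
begin

(* Gaussian binomial [2n choose n]_q = prod_{i=1}^n (q^(n+i) - 1)/(q^i - 1),
   as a polynomial with integer coefficients (the division is exact). *)
definition gauss_binom_2n_n :: "nat \<Rightarrow> int poly" where
  "gauss_binom_2n_n n =
     (\<Prod>i=1..n. monom 1 (n+i) - 1) div (\<Prod>i=1..n. monom 1 i - 1)"

definition odd_dist_prod :: "nat \<Rightarrow> int poly" where
  "odd_dist_prod n = (\<Prod>i=1..n. 1 + monom 1 (2*i - 1))"

end

(*
  Both polynomials are generating functions, by size, of order ideals of the n \<times> n grid
  (Ferrers diagrams fitting in an n \<times> n box): the Gaussian binomial counts all of them and the
  product counts the symmetric ones, which peel off into nested hooks of sizes 2i - 1. So the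
  k-th coefficient of the difference is the number of non-symmetric ideals of size k.
  Complementing an ideal inside the box and rotating by 180 degrees gives the symmetry.
  For unimodality we use Proctor's weighted up and down operators U and D on ideals of an
  m \<times> n rectangle: they are adjoint for a positive weighted inner product and satisfy
  DU - UD = mn - 2|L|, so U is injective on functions supported in rank k < mn/2.
  Transposition commutes with U, so U also maps the antisymmetric functions of rank k,
  a space of dimension c_k/2, injectively into those of rank k + 1.
*)

theory Submission
  imports Defs "HOL-Library.Function_Algebras"
begin

section \<open>Linear algebra and involutions\<close>

lemma sum_fun_apply: "sum f S x = (\<Sum>s\<in>S. f s x)"
  by (induction S rule: infinite_finite_induct) simp_all

lemma sum_of_bool_conj_eq:
  "finite A \<Longrightarrow> (\<Sum>c\<in>A. of_bool (c = p \<and> Q) * f c) = of_bool (p \<in> A \<and> Q) * (f p :: real)"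
  by (cases Q) (simp_all add: of_bool_def if_distrib if_distribR sum.delta cong: if_cong)

interpretation real_fun: vector_space "\<lambda>(r::real) (f::'a \<Rightarrow> real) x. r * f x"
  by unfold_locales (auto simp: fun_eq_iff algebra_simps)

definition matrix_column :: "('b \<Rightarrow> 'a \<Rightarrow> real) \<Rightarrow> 'b set \<Rightarrow> 'a \<Rightarrow> 'b \<Rightarrow> real" where
  "matrix_column M B a b = (if b \<in> B then M b a else 0)"

lemma matrix_column_in_span:
  assumes "finite B"
  shows "matrix_column M B a \<in> real_fun.span ((\<lambda>b b'. if b' = b then 1 else 0) ` B)"
proof -
  have "(\<Sum>b\<in>B. M b a * (if b' = b then 1 else 0)) = matrix_column M B a b'" for b'
  proof -
    have "(\<Sum>b\<in>B. M b a * (if b' = b then 1 else 0)) = (\<Sum>b\<in>B. if b' = b then M b a else 0)"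
      by (rule sum.cong) auto
    thus ?thesis
      using assms by (simp add: matrix_column_def)
  qed
  hence "matrix_column M B a = (\<Sum>b\<in>B. (\<lambda>b'. M b a * (if b' = b then 1 else 0)))"
    by (simp add: fun_eq_iff sum_fun_apply)
  also have "\<dots> \<in> real_fun.span ((\<lambda>b b'. if b' = b then 1 else 0) ` B)"
    by (intro real_fun.span_sum real_fun.span_scale real_fun.span_base imageI)
  finally show ?thesis .
qed

context
  fixes M :: "'b \<Rightarrow> 'a \<Rightarrow> real" and A :: "'a set" and B :: "'b set"
  assumes finite_A: "finite A"
    and kernel_trivial: "\<And>x a. (\<And>b. b \<in> B \<Longrightarrow> (\<Sum>a\<in>A. M b a * x a) = 0) \<Longrightarrow> a \<in> A \<Longrightarrow> x a = 0"
begin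

lemma inj_on_matrix_column: "inj_on (matrix_column M B) A"
proof (rule inj_onI, rule ccontr)
  fix a a' assume a: "a \<in> A" "a' \<in> A" "matrix_column M B a = matrix_column M B a'" "a \<noteq> a'"
  define x where "x c = (if c = a then 1 else if c = a' then - 1 else 0 :: real)" for c
  have "(\<Sum>c\<in>A. M b c * x c) = 0" if "b \<in> B" for b
  proof -
    have "M b a = M b a'"
      using a(3) that by (auto simp: matrix_column_def fun_eq_iff dest: spec[of _ b])
    have "(\<Sum>c\<in>A. M b c * x c) = (\<Sum>c\<in>A. if c = a then M b c else 0) - (\<Sum>c\<in>A. if c = a' then M b c else 0)"
      unfolding sum_subtractf[symmetric] by (rule sum.cong) (auto simp: x_def a(4))
    thus ?thesis
      using \<open>M b a = M b a'\<close> a finite_A by simp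
  qed
  thus False
    using kernel_trivial[of x a] a by (simp add: x_def)
qed

lemma independent_matrix_columns: "real_fun.independent (matrix_column M B ` A)"
  unfolding real_fun.independent_explicit_finite_subsets
proof (intro allI impI ballI)
  fix T u v
  assume T: "T \<subseteq> matrix_column M B ` A" "finite T" and v: "v \<in> T"
    and zero: "(\<Sum>v\<in>T. (\<lambda>b. u v * v b)) = 0"
  define x where "x a = (if matrix_column M B a \<in> T then u (matrix_column M B a) else 0)" for a
  have "(\<Sum>a\<in>A. M b a * x a) = 0" if "b \<in> B" for b
  proof -
    have "(\<Sum>a\<in>A. M b a * x a) = (\<Sum>a\<in>{a\<in>A. matrix_column M B a \<in> T}. u (matrix_column M B a) * matrix_column M B a b)"
      unfolding sum.inter_filter[OF finite_A] using that by (intro sum.cong) (auto simp: x_def matrix_column_def)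
    also have "\<dots> = (\<Sum>v\<in>T. u v * v b)"
      by (rule sum.reindex_bij_betw)
        (use T inj_on_matrix_column in \<open>auto simp: bij_betw_def inj_on_def\<close>)
    also have "\<dots> = 0"
      using zero by (simp add: sum_fun_apply fun_eq_iff)
    finally show ?thesis .
  qed
  moreover obtain a where "a \<in> A" "v = matrix_column M B a"
    using T v by blast
  ultimately show "u v = 0"
    using kernel_trivial[of x a] v by (simp add: x_def)
qed

lemma card_le_card_if_kernel_trivial:
  assumes "finite B"
  shows "card A \<le> card B"
proof -
  let ?E = "(\<lambda>b b'. if b' = b then 1 else 0 :: real) ` B"
  have "finite ?E" "matrix_column M B ` A \<subseteq> real_fun.span ?E"
    using assms matrix_column_in_span[OF assms] by auto
  hence "card (matrix_column M B ` A) \<le> card ?E"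
    using real_fun.independent_span_bound[OF _ independent_matrix_columns] by blast
  thus ?thesis
    using card_image[OF inj_on_matrix_column] card_image_le[OF assms, of "\<lambda>b b'. if b' = b then 1 else 0 :: real"] by linarith
qed

end

lemma fixpoint_free_involution_split:
  assumes "finite X"
    and "\<And>x. x \<in> X \<Longrightarrow> f x \<in> X" "\<And>x. x \<in> X \<Longrightarrow> f (f x) = x" "\<And>x. x \<in> X \<Longrightarrow> f x \<noteq> x"
  shows "\<exists>H \<subseteq> X. X = H \<union> f ` H \<and> H \<inter> f ` H = {}"
  using assms
proof (induction X rule: finite_psubset_induct)
  case (psubset X)
  show ?case
  proof (cases "X = {}")
    case False
    then obtain x where x: "x \<in> X" by blast
    let ?X' = "X - {x, f x}"
    have fx: "f x \<in> X" "f (f x) = x" "f x \<noteq> x"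
      using x psubset.prems by auto
    have closed: "f y \<in> ?X'" if "y \<in> ?X'" for y
    proof -
      have "y \<in> X" "y \<noteq> x" "y \<noteq> f x" "f (f y) = y"
        using that psubset.prems(2) by auto
      moreover have "f y \<noteq> x" "f y \<noteq> f x"
        using calculation fx(2) by (metis, metis)
      ultimately show ?thesis
        using psubset.prems(1) by blast
    qed
    have "\<exists>H \<subseteq> ?X'. ?X' = H \<union> f ` H \<and> H \<inter> f ` H = {}"
      by (rule psubset.IH[OF _ closed]) (use x psubset.prems(2,3) in auto)
    then obtain H where H: "H \<subseteq> ?X'" "?X' = H \<union> f ` H" "H \<inter> f ` H = {}"
      by blast
    have "x \<notin> f ` H"
      using H(1) psubset.prems(2) by auto
    moreover have "f x \<notin> H"
      using H(1) by blast
    ultimately have "insert x H \<inter> f ` insert x H = {}"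
      using H(3) fx(3) by auto
    moreover have "X = insert x H \<union> f ` insert x H"
      using H(2) x fx(1) by auto
    ultimately show ?thesis
      using H x by blast
  qed simp
qed

lemma card_fixpoint_free_involution_split:
  assumes "H \<inter> f ` H = {}" "finite H" "\<And>x. x \<in> H \<Longrightarrow> f (f x) = x"
  shows "card (H \<union> f ` H) = 2 * card H"
proof -
  have "inj_on f H"
    by (metis assms(3) inj_onI)
  thus ?thesis
    using assms by (simp add: card_Un_disjoint card_image)
qed

section \<open>Order ideals of a rectangle\<close>

text \<open>The cell (i, j) lies in row i and column j. The down-closed subsets of the m \<times> n grid are
  the Ferrers diagrams of partitions fitting in an m \<times> n box, so p_k(m, n) is the number of
  such ideals of size k.\<close>

definition cells :: "nat \<Rightarrow> nat \<Rightarrow> (nat \<times> nat) set" where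
  "cells m n = {..<m} \<times> {..<n}"

definition down_closed :: "(nat \<times> nat) set \<Rightarrow> bool" where
  "down_closed S \<longleftrightarrow> (\<forall>i j i' j'. (i, j) \<in> S \<longrightarrow> i' \<le> i \<longrightarrow> j' \<le> j \<longrightarrow> (i', j') \<in> S)"

definition rect_ideals :: "nat \<Rightarrow> nat \<Rightarrow> (nat \<times> nat) set set" where
  "rect_ideals m n = {S. S \<subseteq> cells m n \<and> down_closed S}"

definition card_gen_poly :: "'a set set \<Rightarrow> int poly" where
  "card_gen_poly F = (\<Sum>S\<in>F. monom 1 (card S))"

lemma finite_cells [simp]: "finite (cells m n)"
  by (simp add: cells_def)

lemma card_cells [simp]: "card (cells m n) = m * n"
  by (simp add: cells_def card_cartesian_product)

lemma finite_rect_ideals [simp]: "finite (rect_ideals m n)"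
  by (rule finite_subset[of _ "Pow (cells m n)"]) (auto simp: rect_ideals_def)

lemma rect_ideal_subset_cells: "S \<in> rect_ideals m n \<Longrightarrow> S \<subseteq> cells m n"
  by (simp add: rect_ideals_def)

lemma finite_rect_ideal: "S \<in> rect_ideals m n \<Longrightarrow> finite S"
  by (metis finite_cells finite_subset rect_ideal_subset_cells)

lemma card_rect_ideal_le: "S \<in> rect_ideals m n \<Longrightarrow> card S \<le> m * n"
  by (metis card_cells card_mono finite_cells rect_ideal_subset_cells)

lemma rect_ideal_down_closed:
  "S \<in> rect_ideals m n \<Longrightarrow> (i, j) \<in> S \<Longrightarrow> i' \<le> i \<Longrightarrow> j' \<le> j \<Longrightarrow> (i', j') \<in> S"
  by (auto simp: rect_ideals_def down_closed_def)

lemma rect_ideals_Int: "S \<in> rect_ideals m n \<Longrightarrow> T \<in> rect_ideals m n \<Longrightarrow> S \<inter> T \<in> rect_ideals m n"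
  by (auto simp: rect_ideals_def down_closed_def)

lemma rect_ideals_Un: "S \<in> rect_ideals m n \<Longrightarrow> T \<in> rect_ideals m n \<Longrightarrow> S \<union> T \<in> rect_ideals m n"
  by (auto simp: rect_ideals_def down_closed_def)

lemma rect_ideals_0: "rect_ideals 0 n = {{}}" "rect_ideals m 0 = {{}}"
  by (auto simp: rect_ideals_def down_closed_def cells_def)

lemma coeff_card_gen_poly:
  assumes "finite F"
  shows "coeff (card_gen_poly F) k = int (card {S \<in> F. card S = k})"
proof -
  have "coeff (card_gen_poly F) k = (\<Sum>S\<in>F. if card S = k then 1 else 0)"
    by (simp add: card_gen_poly_def coeff_sum)
  also have "\<dots> = int (card {S \<in> F. card S = k})"
    by (simp add: sum.inter_filter[OF assms, symmetric])
  finally show ?thesis .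
qed

lemma card_gen_poly_bij_shift:
  assumes "bij_betw f F G" and "\<And>S. S \<in> F \<Longrightarrow> card (f S) = d + card S"
  shows "card_gen_poly G = monom 1 d * card_gen_poly F"
proof -
  have "card_gen_poly G = (\<Sum>S\<in>F. monom 1 (card (f S)))"
    unfolding card_gen_poly_def by (rule sum.reindex_bij_betw[OF assms(1), symmetric])
  also have "\<dots> = (\<Sum>S\<in>F. monom 1 d * monom 1 (card S))"
    by (rule sum.cong) (simp_all add: assms(2) mult_monom)
  finally show ?thesis by (simp add: card_gen_poly_def sum_distrib_left)
qed

lemma card_gen_poly_split:
  assumes "finite F"
  shows "card_gen_poly F = card_gen_poly {S \<in> F. P S} + card_gen_poly {S \<in> F. \<not> P S}"
  unfolding card_gen_poly_def using sum.Int_Diff[OF assms, of _ "Collect P"]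
  by (simp add: Int_def set_diff_eq)

definition add_first_row :: "nat \<Rightarrow> (nat \<times> nat) set \<Rightarrow> (nat \<times> nat) set" where
  "add_first_row n T = {0} \<times> {..n} \<union> apfst Suc ` T"

definition drop_first_row :: "(nat \<times> nat) set \<Rightarrow> (nat \<times> nat) set" where
  "drop_first_row S = {c. apfst Suc c \<in> S}"

lemma mem_add_first_row:
  "(i, j) \<in> add_first_row n T \<longleftrightarrow> (i = 0 \<and> j \<le> n) \<or> (0 < i \<and> (i - 1, j) \<in> T)"
  by (cases i) (auto simp: add_first_row_def image_iff apfst_def map_prod_def split: prod.splits)

lemma card_add_first_row:
  assumes "finite T" shows "card (add_first_row n T) = Suc n + card T"
proof -
  have "card (apfst Suc ` T) = card T"
    by (rule card_image) (simp add: inj_on_subset[of _ UNIV])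
  thus ?thesis unfolding add_first_row_def
    by (subst card_Un_disjoint) (auto simp: assms card_cartesian_product)
qed

lemma add_first_row_in_rect_ideals:
  assumes T: "T \<in> rect_ideals m (Suc n)"
  shows "add_first_row n T \<in> rect_ideals (Suc m) (Suc n)"
proof -
  have "add_first_row n T \<subseteq> cells (Suc m) (Suc n)"
    using rect_ideal_subset_cells[OF T] by (auto simp: cells_def add_first_row_def)
  moreover have "down_closed (add_first_row n T)"
    unfolding down_closed_def mem_add_first_row
    using T rect_ideal_subset_cells[OF T]
    by (auto simp: cells_def) (metis diff_le_mono rect_ideal_down_closed[OF T])
  ultimately show ?thesis
    by (simp add: rect_ideals_def)
qed

lemma drop_first_row_in_rect_ideals:
  "S \<in> rect_ideals (Suc m) n \<Longrightarrow> drop_first_row S \<in> rect_ideals m n"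
  by (auto simp: drop_first_row_def rect_ideals_def down_closed_def cells_def apfst_def)

lemma add_first_row_drop_first_row:
  assumes S: "S \<in> rect_ideals (Suc m) (Suc n)" "(0, n) \<in> S"
  shows "add_first_row n (drop_first_row S) = S"
proof (rule set_eqI)
  fix c :: "nat \<times> nat"
  obtain i j where c: "c = (i, j)" by fastforce
  have "(i, j) \<in> S \<longleftrightarrow> (i = 0 \<and> j \<le> n) \<or> (0 < i \<and> (Suc (i - 1), j) \<in> S)"
    using rect_ideal_subset_cells[OF S(1)] rect_ideal_down_closed[OF S, of 0 j]
    by (cases i) (auto simp: cells_def)
  thus "c \<in> add_first_row n (drop_first_row S) \<longleftrightarrow> c \<in> S"
    by (simp add: c mem_add_first_row drop_first_row_def apfst_def)
qed

lemma bij_betw_add_first_row: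
  "bij_betw (add_first_row n) (rect_ideals m (Suc n)) {S \<in> rect_ideals (Suc m) (Suc n). (0, n) \<in> S}"
  by (rule bij_betw_byWitness[where f' = drop_first_row])
    (auto simp: add_first_row_drop_first_row add_first_row_in_rect_ideals drop_first_row_in_rect_ideals
      mem_add_first_row, auto simp: drop_first_row_def mem_add_first_row apfst_def)

lemma rect_ideals_Suc_last_column_empty:
  "{S \<in> rect_ideals (Suc m) (Suc n). (0, n) \<notin> S} = rect_ideals (Suc m) n"
proof safe
  fix S assume S: "S \<in> rect_ideals (Suc m) (Suc n)" "(0, n) \<notin> S"
  have "j \<noteq> n" if "(i, j) \<in> S" for i j
    using rect_ideal_down_closed[OF S(1) that, of 0 j] S(2) by auto
  thus "S \<in> rect_ideals (Suc m) n"
    using S(1) by (fastforce simp: rect_ideals_def cells_def less_Suc_eq)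
qed (auto simp: rect_ideals_def cells_def)

lemma card_gen_poly_rect_ideals_Suc:
  "card_gen_poly (rect_ideals (Suc m) (Suc n)) =
     card_gen_poly (rect_ideals (Suc m) n) + monom 1 (Suc n) * card_gen_poly (rect_ideals m (Suc n))"
  using card_gen_poly_split[of "rect_ideals (Suc m) (Suc n)" "\<lambda>S. (0, n) \<notin> S"]
    card_gen_poly_bij_shift[OF bij_betw_add_first_row card_add_first_row[OF finite_rect_ideal]]
  by (simp add: rect_ideals_Suc_last_column_empty)

lemma card_gen_poly_rect_ideals_mult:
  "card_gen_poly (rect_ideals m n) * (\<Prod>i<m. monom 1 (Suc i) - 1) = (\<Prod>i<m. monom 1 (n + Suc i) - 1)"
proof (induction m arbitrary: n)
  case 0
  show ?case by (simp add: rect_ideals_0 card_gen_poly_def)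
next
  case (Suc m)
  note IH_m = Suc.IH
  show ?case
  proof (induction n)
    case 0
    show ?case by (simp add: rect_ideals_0 card_gen_poly_def)
  next
    case (Suc n)
    let ?G = "\<lambda>m n. card_gen_poly (rect_ideals m n)" and ?q = "\<lambda>k. monom (1::int) k"
    let ?D = "\<Prod>i<m. ?q (Suc i) - 1" and ?H = "\<Prod>i<m. ?q (Suc n + Suc i) - 1"
    have D: "(\<Prod>i<Suc m. ?q (Suc i) - 1) = ?D * (?q (Suc m) - 1)"
      by simp
    have H: "(\<Prod>i<Suc m. ?q (n + Suc i) - 1) = (?q (Suc n) - 1) * ?H"
      by (subst prod.lessThan_Suc_shift) simp
    have "?G (Suc m) (Suc n) * (\<Prod>i<Suc m. ?q (Suc i) - 1)
        = ?G (Suc m) n * (\<Prod>i<Suc m. ?q (Suc i) - 1) + ?q (Suc n) * (?G m (Suc n) * ?D) * (?q (Suc m) - 1)"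
      by (simp only: card_gen_poly_rect_ideals_Suc D algebra_simps)
    also have "\<dots> = (?q (Suc n) - 1) * ?H + ?q (Suc n) * ?H * (?q (Suc m) - 1)"
      using Suc.IH IH_m[of "Suc n"] by (simp only: H)
    also have "\<dots> = ?H * (?q (Suc n + Suc m) - 1)"
      by (simp add: algebra_simps mult_monom)
    finally show ?case by simp
  qed
qed

lemma gauss_binom_2n_n_eq: "gauss_binom_2n_n n = card_gen_poly (rect_ideals n n)"
proof -
  have "monom (1::int) (Suc i) - 1 \<noteq> 0" for i
  proof
    assume "monom (1::int) (Suc i) - 1 = 0"
    hence "coeff (monom (1::int) (Suc i) - 1) 0 = 0" by simp
    thus False by simp
  qed
  hence nonzero: "(\<Prod>i<n. monom (1::int) (Suc i) - 1) \<noteq> 0"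
    by simp
  have top: "(\<Prod>i=1..n. monom 1 (n + i) - 1) = (\<Prod>i<n. monom (1::int) (n + Suc i) - 1)"
    and bottom: "(\<Prod>i=1..n. monom 1 i - 1) = (\<Prod>i<n. monom (1::int) (Suc i) - 1)"
    by (simp_all add: prod.atLeast1_atMost_eq)
  show ?thesis
    unfolding gauss_binom_2n_n_def top bottom card_gen_poly_rect_ideals_mult[symmetric]
    using nonzero by (rule nonzero_mult_div_cancel_right)
qed

section \<open>Symmetric ideals\<close>

definition sym_ideals :: "nat \<Rightarrow> (nat \<times> nat) set set" where
  "sym_ideals n = {S \<in> rect_ideals n n. sym S}"

text \<open>A symmetric ideal of the (n + 1) \<times> (n + 1) grid containing (0, n) is the hook of size
  2n + 1 along its first row and column wrapped around a symmetric ideal of the n \<times> n grid: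
  the bijection between self-conjugate partitions and partitions into distinct odd parts.\<close>

definition add_hook :: "nat \<Rightarrow> (nat \<times> nat) set \<Rightarrow> (nat \<times> nat) set" where
  "add_hook n T = {0} \<times> {..n} \<union> {1..n} \<times> {0} \<union> map_prod Suc Suc ` T"

definition drop_hook :: "(nat \<times> nat) set \<Rightarrow> (nat \<times> nat) set" where
  "drop_hook S = {c. map_prod Suc Suc c \<in> S}"

lemma mem_add_hook:
  "(i, j) \<in> add_hook n T \<longleftrightarrow>
     (i = 0 \<and> j \<le> n) \<or> (j = 0 \<and> i \<le> n) \<or> (0 < i \<and> 0 < j \<and> (i - 1, j - 1) \<in> T)"
  by (cases i; cases j) (auto simp: add_hook_def)

lemma card_add_hook:
  assumes "finite T" shows "card (add_hook n T) = 2 * n + 1 + card T"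
proof -
  have "card (map_prod Suc Suc ` T) = card T"
    by (rule card_image) (auto simp: inj_on_def)
  thus ?thesis unfolding add_hook_def
    by (subst card_Un_disjoint, simp_all add: assms, fastforce)
       (subst card_Un_disjoint, auto simp: card_cartesian_product)
qed

lemma add_hook_in_sym_ideals:
  assumes "T \<in> sym_ideals n"
  shows "add_hook n T \<in> sym_ideals (Suc n)"
proof -
  have T: "T \<in> rect_ideals n n" "sym T"
    using assms by (simp_all add: sym_ideals_def)
  have "add_hook n T \<subseteq> cells (Suc n) (Suc n)"
    using rect_ideal_subset_cells[OF T(1)] by (auto simp: cells_def add_hook_def)
  moreover have "down_closed (add_hook n T)"
    unfolding down_closed_def
  proof (intro allI impI)
    fix i j i' j' assume ij: "(i, j) \<in> add_hook n T" "i' \<le> i" "j' \<le> j"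
    have "i \<le> n \<and> j \<le> n"
      using ij(1) rect_ideal_subset_cells[OF T(1)] by (auto simp: mem_add_hook cells_def)
    moreover have "(i' - 1, j' - 1) \<in> T" if "0 < i'" "0 < j'"
      using ij that rect_ideal_down_closed[OF T(1), of "i - 1" "j - 1" "i' - 1" "j' - 1"]
      by (auto simp: mem_add_hook)
    ultimately show "(i', j') \<in> add_hook n T"
      using ij(2,3) by (auto simp: mem_add_hook)
  qed
  moreover have "sym (add_hook n T)"
    using T(2) by (auto simp: sym_def mem_add_hook)
  ultimately show ?thesis
    by (simp add: sym_ideals_def rect_ideals_def)
qed

lemma drop_hook_in_sym_ideals:
  assumes "S \<in> sym_ideals (Suc n)"
  shows "drop_hook S \<in> sym_ideals n"
proof -
  have ideal: "S \<in> rect_ideals (Suc n) (Suc n)" and "sym S"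
    using assms by (simp_all add: sym_ideals_def)
  have "drop_hook S \<subseteq> cells n n"
    using rect_ideal_subset_cells[OF ideal] by (auto simp: drop_hook_def cells_def)
  moreover have "down_closed (drop_hook S)"
    unfolding down_closed_def drop_hook_def using rect_ideal_down_closed[OF ideal] by simp
  moreover have "sym (drop_hook S)"
    using \<open>sym S\<close> by (auto simp: drop_hook_def sym_def)
  ultimately show ?thesis
    by (simp add: sym_ideals_def rect_ideals_def)
qed

lemma add_hook_drop_hook:
  assumes "S \<in> sym_ideals (Suc n)" "(0, n) \<in> S"
  shows "add_hook n (drop_hook S) = S"
proof (rule set_eqI)
  have S: "S \<in> rect_ideals (Suc n) (Suc n)" "sym S"
    using assms(1) by (simp_all add: sym_ideals_def)
  have "(n, 0) \<in> S"
    using S(2) assms(2) by (auto dest: symD)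
  fix c :: "nat \<times> nat"
  obtain i j where c: "c = (i, j)" by fastforce
  have "(i, j) \<in> S \<longleftrightarrow>
      (i = 0 \<and> j \<le> n) \<or> (j = 0 \<and> i \<le> n) \<or> (0 < i \<and> 0 < j \<and> (Suc (i - 1), Suc (j - 1)) \<in> S)"
    using rect_ideal_subset_cells[OF S(1)] rect_ideal_down_closed[OF S(1) assms(2), of 0 j]
      rect_ideal_down_closed[OF S(1) \<open>(n, 0) \<in> S\<close>, of i 0]
    by (cases i; cases j) (auto simp: cells_def)
  thus "c \<in> add_hook n (drop_hook S) \<longleftrightarrow> c \<in> S"
    by (simp add: c mem_add_hook drop_hook_def)
qed

lemma bij_betw_add_hook:
  "bij_betw (add_hook n) (sym_ideals n) {S \<in> sym_ideals (Suc n). (0, n) \<in> S}"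
  by (rule bij_betw_byWitness[where f' = drop_hook])
    (auto simp: add_hook_drop_hook add_hook_in_sym_ideals drop_hook_in_sym_ideals mem_add_hook,
      auto simp: drop_hook_def mem_add_hook)

lemma sym_ideals_Suc_last_column_empty:
  "{S \<in> sym_ideals (Suc n). (0, n) \<notin> S} = sym_ideals n"
proof safe
  fix S assume S: "S \<in> sym_ideals (Suc n)" "(0, n) \<notin> S"
  hence ideal: "S \<in> rect_ideals (Suc n) (Suc n)" and "sym S"
    by (simp_all add: sym_ideals_def)
  have "j \<noteq> n" if "(i, j) \<in> S" for i j
    using rect_ideal_down_closed[OF ideal that, of 0 j] S(2) by auto
  moreover have "i \<noteq> n" if "(i, j) \<in> S" for i j
    using \<open>sym S\<close> calculation that by (auto dest: symD)
  ultimately show "S \<in> sym_ideals n"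
    using ideal \<open>sym S\<close> by (fastforce simp: sym_ideals_def rect_ideals_def cells_def less_Suc_eq)
qed (auto simp: sym_ideals_def rect_ideals_def cells_def)

lemma odd_dist_prod_eq: "odd_dist_prod n = card_gen_poly (sym_ideals n)"
proof (induction n)
  case 0
  have "sym_ideals 0 = {{}}"
    by (auto simp: sym_ideals_def rect_ideals_0 sym_def)
  thus ?case by (simp add: odd_dist_prod_def card_gen_poly_def)
next
  case (Suc n)
  have fin: "finite (sym_ideals (Suc n))"
    by (simp add: sym_ideals_def)
  have "card_gen_poly {S \<in> sym_ideals (Suc n). (0, n) \<in> S} = monom 1 (2 * n + 1) * card_gen_poly (sym_ideals n)"
    by (rule card_gen_poly_bij_shift[OF bij_betw_add_hook card_add_hook])
       (auto simp: sym_ideals_def intro: finite_rect_ideal)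
  hence "card_gen_poly (sym_ideals (Suc n)) = card_gen_poly (sym_ideals n) * (1 + monom 1 (2 * n + 1))"
    using card_gen_poly_split[OF fin, of "\<lambda>S. (0, n) \<notin> S"]
    by (simp add: sym_ideals_Suc_last_column_empty algebra_simps)
  moreover have "odd_dist_prod (Suc n) = odd_dist_prod n * (1 + monom 1 (2 * n + 1))"
    by (simp add: odd_dist_prod_def)
  ultimately show ?case using Suc.IH by simp
qed

section \<open>Non-symmetric ideals and complementation\<close>

definition asym_ideals :: "nat \<Rightarrow> nat \<Rightarrow> (nat \<times> nat) set set" where
  "asym_ideals n k = {S \<in> rect_ideals n n. \<not> sym S \<and> card S = k}"

lemma coeff_card_gen_poly_diff:
  assumes "finite F" "G \<subseteq> F"
  shows "coeff (card_gen_poly F - card_gen_poly G) k = int (card {S \<in> F - G. card S = k})"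
proof -
  let ?F = "{S \<in> F. card S = k}" and ?G = "{S \<in> G. card S = k}"
  have "finite G"
    using assms finite_subset by blast
  hence fin: "finite ?G" "?G \<subseteq> ?F"
    using assms by auto
  hence "card ?G \<le> card ?F"
    using assms(1) by (simp add: card_mono)
  moreover have "{S \<in> F - G. card S = k} = ?F - ?G"
    by blast
  ultimately show ?thesis
    using assms fin by (simp add: coeff_card_gen_poly card_Diff_subset of_nat_diff finite_subset)
qed

lemma coeff_gauss_binom_minus_odd_dist_prod:
  "coeff (gauss_binom_2n_n n - odd_dist_prod n) k = int (card (asym_ideals n k))"
proof -
  have sub: "sym_ideals n \<subseteq> rect_ideals n n"
    by (auto simp: sym_ideals_def)
  have asym: "{S \<in> rect_ideals n n - sym_ideals n. card S = k} = asym_ideals n k"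
    by (auto simp: asym_ideals_def sym_ideals_def)
  show ?thesis
    unfolding gauss_binom_2n_n_eq odd_dist_prod_eq coeff_card_gen_poly_diff[OF finite_rect_ideals sub] asym ..
qed

lemma finite_asym_ideals [simp]: "finite (asym_ideals n k)"
  by (simp add: asym_ideals_def)

lemma asym_ideals_empty: "n * n < k \<Longrightarrow> asym_ideals n k = {}"
  by (auto simp: asym_ideals_def) (meson card_rect_ideal_le not_le)

definition rotate_cell :: "nat \<Rightarrow> nat \<Rightarrow> nat \<times> nat \<Rightarrow> nat \<times> nat" where
  "rotate_cell m n = map_prod (\<lambda>i. m - 1 - i) (\<lambda>j. n - 1 - j)"

definition ideal_complement :: "nat \<Rightarrow> nat \<Rightarrow> (nat \<times> nat) set \<Rightarrow> (nat \<times> nat) set" where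
  "ideal_complement m n S = cells m n - rotate_cell m n ` S"

lemma rotate_cell_in_cells: "c \<in> cells m n \<Longrightarrow> rotate_cell m n c \<in> cells m n"
  by (auto simp: rotate_cell_def cells_def)

lemma rotate_cell_rotate_cell: "c \<in> cells m n \<Longrightarrow> rotate_cell m n (rotate_cell m n c) = c"
  by (auto simp: rotate_cell_def cells_def)

lemma inj_on_rotate_cell: "inj_on (rotate_cell m n) (cells m n)"
  by (metis inj_onI rotate_cell_rotate_cell)

lemma mem_ideal_complement:
  assumes "S \<subseteq> cells m n"
  shows "c \<in> ideal_complement m n S \<longleftrightarrow> c \<in> cells m n \<and> rotate_cell m n c \<notin> S"
proof -
  have "c \<in> rotate_cell m n ` S \<longleftrightarrow> rotate_cell m n c \<in> S" if "c \<in> cells m n"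
    using that assms rotate_cell_rotate_cell[of c m n] rotate_cell_rotate_cell[of _ m n]
    by (force simp: image_iff)
  thus ?thesis
    by (auto simp: ideal_complement_def)
qed

lemma ideal_complement_in_rect_ideals:
  assumes S: "S \<in> rect_ideals m n"
  shows "ideal_complement m n S \<in> rect_ideals m n"
proof -
  note mem = mem_ideal_complement[OF rect_ideal_subset_cells[OF S]]
  have "(i', j') \<in> ideal_complement m n S"
    if ij: "(i, j) \<in> ideal_complement m n S" "i' \<le> i" "j' \<le> j" for i j i' j'
  proof -
    have "i < m" "j < n" "(m - 1 - i, n - 1 - j) \<notin> S"
      using ij(1) by (simp_all add: mem rotate_cell_def cells_def)
    moreover have "m - 1 - i \<le> m - 1 - i'" "n - 1 - j \<le> n - 1 - j'"
      using ij(2,3) by simp_all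
    ultimately have "(m - 1 - i', n - 1 - j') \<notin> S"
      using rect_ideal_down_closed[OF S, of "m - 1 - i'" "n - 1 - j'" "m - 1 - i" "n - 1 - j"]
      by blast
    thus ?thesis
      using ij(2,3) \<open>i < m\<close> \<open>j < n\<close> by (simp add: mem rotate_cell_def cells_def)
  qed
  moreover have "ideal_complement m n S \<subseteq> cells m n"
    by (auto simp: ideal_complement_def)
  ultimately show ?thesis
    unfolding rect_ideals_def down_closed_def by blast
qed

lemma ideal_complement_ideal_complement:
  assumes "S \<subseteq> cells m n"
  shows "ideal_complement m n (ideal_complement m n S) = S"
proof -
  have "ideal_complement m n S \<subseteq> cells m n"
    by (auto simp: ideal_complement_def)
  thus ?thesis
    using assms rotate_cell_rotate_cell rotate_cell_in_cells
    by (auto simp: set_eq_iff mem_ideal_complement)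
qed

lemma card_ideal_complement:
  assumes "S \<subseteq> cells m n"
  shows "card (ideal_complement m n S) = m * n - card S"
proof -
  have "rotate_cell m n ` S \<subseteq> cells m n"
    using assms rotate_cell_in_cells by blast
  moreover have "card (rotate_cell m n ` S) = card S"
    using card_image inj_on_subset[OF inj_on_rotate_cell assms] by blast
  ultimately show ?thesis
    unfolding ideal_complement_def by (simp add: card_Diff_subset finite_subset)
qed

lemma converse_ideal_complement:
  "(ideal_complement n n S)\<inverse> = ideal_complement n n (S\<inverse>)"
  by (auto simp: ideal_complement_def rotate_cell_def cells_def image_iff)

lemma ideal_complement_asym_ideals:
  assumes "S \<in> asym_ideals n k"
  shows "ideal_complement n n S \<in> asym_ideals n (n * n - k)"
proof -
  have S: "S \<in> rect_ideals n n" "\<not> sym S" "card S = k"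
    using assms by (simp_all add: asym_ideals_def)
  note sub = rect_ideal_subset_cells[OF S(1)]
  have "sym (ideal_complement n n S) \<Longrightarrow> sym S"
    using ideal_complement_ideal_complement[OF sub] converse_ideal_complement[of n "ideal_complement n n S"]
    by (simp add: sym_conv_converse_eq)
  thus ?thesis
    using S by (auto simp: asym_ideals_def ideal_complement_in_rect_ideals card_ideal_complement[OF sub])
qed

lemma card_asym_ideals_symmetric:
  assumes "k \<le> n * n"
  shows "card (asym_ideals n k) = card (asym_ideals n (n * n - k))"
proof (rule bij_betw_same_card[of "ideal_complement n n"],
       rule bij_betw_byWitness[where f' = "ideal_complement n n"])
  show "\<forall>S\<in>asym_ideals n k. ideal_complement n n (ideal_complement n n S) = S"
    "\<forall>S\<in>asym_ideals n (n * n - k). ideal_complement n n (ideal_complement n n S) = S"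
    by (auto simp: asym_ideals_def ideal_complement_ideal_complement rect_ideal_subset_cells)
  show "ideal_complement n n ` asym_ideals n k \<subseteq> asym_ideals n (n * n - k)"
    using ideal_complement_asym_ideals by blast
  show "ideal_complement n n ` asym_ideals n (n * n - k) \<subseteq> asym_ideals n k"
    using ideal_complement_asym_ideals[of _ n "n * n - k"] assms by auto
qed

section \<open>Proctor's up and down operators\<close>

definition cell_content :: "nat \<times> nat \<Rightarrow> real" where
  "cell_content c = real (snd c) - real (fst c)"

text \<open>Proctor's weights: on the cells of content c the weight (n - c)(m + c) is positive inside
  the grid and vanishes on the first diagonals outside it, and its second difference in c is -2.
  This is what makes the commutator of the down and up operators a multiple of the identity
  on each rank.\<close>

definition content_weight :: "nat \<Rightarrow> nat \<Rightarrow> real \<Rightarrow> real" where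
  "content_weight m n x = (real n - x) * (real m + x)"

definition cell_weight :: "nat \<Rightarrow> nat \<Rightarrow> nat \<times> nat \<Rightarrow> real" where
  "cell_weight m n c = content_weight m n (cell_content c)"

definition ideal_weight :: "nat \<Rightarrow> nat \<Rightarrow> (nat \<times> nat) set \<Rightarrow> real" where
  "ideal_weight m n S = (\<Prod>c\<in>S. cell_weight m n c)"

definition up_op :: "nat \<Rightarrow> nat \<Rightarrow> ((nat \<times> nat) set \<Rightarrow> real) \<Rightarrow> (nat \<times> nat) set \<Rightarrow> real" where
  "up_op m n y M =
     (\<Sum>c\<in>cells m n. if c \<in> M \<and> M - {c} \<in> rect_ideals m n then y (M - {c}) else 0)"

definition down_op :: "nat \<Rightarrow> nat \<Rightarrow> ((nat \<times> nat) set \<Rightarrow> real) \<Rightarrow> (nat \<times> nat) set \<Rightarrow> real" where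
  "down_op m n y L =
     (\<Sum>c\<in>cells m n. if c \<notin> L \<and> insert c L \<in> rect_ideals m n then cell_weight m n c * y (insert c L) else 0)"

lemma cell_weight_pos:
  assumes "c \<in> cells m n" shows "0 < cell_weight m n c"
  using assms by (auto simp: cell_weight_def content_weight_def cell_content_def cells_def intro!: mult_pos_pos)

lemma ideal_weight_pos: "S \<in> rect_ideals m n \<Longrightarrow> 0 < ideal_weight m n S"
  unfolding ideal_weight_def using rect_ideal_subset_cells cell_weight_pos by (metis prod_pos subsetD)

lemma up_down_adjoint:
  "(\<Sum>M\<in>rect_ideals m n. ideal_weight m n M * up_op m n x M * z M) =
   (\<Sum>L\<in>rect_ideals m n. ideal_weight m n L * x L * down_op m n z L)"
proof -
  let ?X = "rect_ideals m n" and ?w = "ideal_weight m n"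
  let ?up = "\<lambda>c M. c \<in> M \<and> M - {c} \<in> ?X" and ?down = "\<lambda>c L. c \<notin> L \<and> insert c L \<in> ?X"
  have "(\<Sum>M\<in>?X. if ?up c M then ?w M * x (M - {c}) * z M else 0) =
        (\<Sum>L\<in>?X. if ?down c L then ?w L * x L * (cell_weight m n c * z (insert c L)) else 0)" for c
  proof -
    have "(\<Sum>M\<in>?X. if ?up c M then ?w M * x (M - {c}) * z M else 0) =
          (\<Sum>M\<in>{M\<in>?X. ?up c M}. ?w M * x (M - {c}) * z M)"
      by (simp add: sum.inter_filter)
    also have "\<dots> = (\<Sum>L\<in>{L\<in>?X. ?down c L}. ?w L * x L * (cell_weight m n c * z (insert c L)))"
    proof (rule sum.reindex_bij_witness[where i = "insert c" and j = "\<lambda>M. M - {c}"])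
      fix M assume "M \<in> {M\<in>?X. ?up c M}"
      hence M: "M \<in> ?X" "c \<in> M" "M - {c} \<in> ?X" by auto
      show "insert c (M - {c}) = M" "M - {c} \<in> {L\<in>?X. ?down c L}"
        using M by (auto simp: insert_absorb)
      have "?w M = cell_weight m n c * ?w (M - {c})"
        unfolding ideal_weight_def using finite_rect_ideal[OF M(1)] M(2) by (simp add: prod.remove)
      thus "?w (M - {c}) * x (M - {c}) * (cell_weight m n c * z (insert c (M - {c}))) =
            ?w M * x (M - {c}) * z M"
        using M(2) by (simp add: insert_absorb)
    qed auto
    also have "\<dots> = (\<Sum>L\<in>?X. if ?down c L then ?w L * x L * (cell_weight m n c * z (insert c L)) else 0)"
      by (simp add: sum.inter_filter)
    finally show ?thesis .
  qed
  hence "(\<Sum>c\<in>cells m n. \<Sum>M\<in>?X. if ?up c M then ?w M * x (M - {c}) * z M else 0) =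
         (\<Sum>c\<in>cells m n. \<Sum>L\<in>?X. if ?down c L then ?w L * x L * (cell_weight m n c * z (insert c L)) else 0)"
    by simp
  thus ?thesis
    unfolding up_op_def down_op_def sum_distrib_left sum_distrib_right
    by (subst (1 2) sum.swap) (simp add: if_distrib if_distribR mult.assoc cong: if_cong)
qed

definition addable :: "(nat \<times> nat) set \<Rightarrow> nat \<times> nat \<Rightarrow> bool" where
  "addable L c \<longleftrightarrow> c \<notin> L \<and> (0 < fst c \<longrightarrow> (fst c - 1, snd c) \<in> L) \<and> (0 < snd c \<longrightarrow> (fst c, snd c - 1) \<in> L)"

definition removable :: "(nat \<times> nat) set \<Rightarrow> nat \<times> nat \<Rightarrow> bool" where
  "removable L c \<longleftrightarrow> c \<in> L \<and> (Suc (fst c), snd c) \<notin> L \<and> (fst c, Suc (snd c)) \<notin> L"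

lemma insert_in_rect_ideals_iff:
  assumes L: "L \<in> rect_ideals m n"
  shows "c \<notin> L \<and> insert c L \<in> rect_ideals m n \<longleftrightarrow> c \<in> cells m n \<and> addable L c"
proof
  assume c: "c \<notin> L \<and> insert c L \<in> rect_ideals m n"
  show "c \<in> cells m n \<and> addable L c"
    using c rect_ideal_subset_cells[of "insert c L"]
      rect_ideal_down_closed[of "insert c L" m n "fst c" "snd c" "fst c - 1" "snd c"]
      rect_ideal_down_closed[of "insert c L" m n "fst c" "snd c" "fst c" "snd c - 1"]
    by (cases c) (auto simp: addable_def)
next
  assume c: "c \<in> cells m n \<and> addable L c"
  obtain i j where ij: "c = (i, j)" by fastforce
  have "(i', j') \<in> insert c L" if "(p, q) \<in> insert c L" "i' \<le> p" "j' \<le> q" for p q i' j'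
  proof (cases "(p, q) = c \<and> (i', j') \<noteq> c")
    case True
    hence "i' < i \<or> j' < j"
      using that ij by auto
    thus ?thesis
    proof
      assume "i' < i"
      hence "(i - 1, j) \<in> L"
        using c ij by (simp add: addable_def)
      thus ?thesis
        using rect_ideal_down_closed[OF L, of "i - 1" j i' j'] True ij that \<open>i' < i\<close> by auto
    next
      assume "j' < j"
      hence "(i, j - 1) \<in> L"
        using c ij by (simp add: addable_def)
      thus ?thesis
        using rect_ideal_down_closed[OF L, of i "j - 1" i' j'] True ij that \<open>j' < j\<close> by auto
    qed
  qed (use rect_ideal_down_closed[OF L] that in auto)
  moreover have "insert c L \<subseteq> cells m n"
    using c rect_ideal_subset_cells[OF L] by simp
  ultimately show "c \<notin> L \<and> insert c L \<in> rect_ideals m n"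
    using c by (auto simp: rect_ideals_def down_closed_def addable_def)
qed

lemma remove_in_rect_ideals_iff:
  assumes L: "L \<in> rect_ideals m n"
  shows "c \<in> L \<and> L - {c} \<in> rect_ideals m n \<longleftrightarrow> removable L c"
proof
  assume c: "c \<in> L \<and> L - {c} \<in> rect_ideals m n"
  obtain i j where ij: "c = (i, j)" by fastforce
  have "(Suc i, j) \<notin> L" "(i, Suc j) \<notin> L"
    using c ij rect_ideal_down_closed[of "L - {c}" m n "Suc i" j i j]
      rect_ideal_down_closed[of "L - {c}" m n i "Suc j" i j]
    by auto
  thus "removable L c"
    using c ij by (simp add: removable_def)
next
  assume c: "removable L c"
  obtain i j where ij: "c = (i, j)" by fastforce
  have "(i', j') \<noteq> c" if "(p, q) \<in> L - {c}" "i' \<le> p" "j' \<le> q" for p q i' j'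
  proof
    assume "(i', j') = c"
    hence "Suc i \<le> p \<and> j \<le> q \<or> i \<le> p \<and> Suc j \<le> q"
      using that ij by auto
    thus False
      using c ij that rect_ideal_down_closed[OF L, of p q "Suc i" j]
        rect_ideal_down_closed[OF L, of p q i "Suc j"]
      by (auto simp: removable_def)
  qed
  hence "down_closed (L - {c})"
    using rect_ideal_down_closed[OF L] by (auto simp: down_closed_def)
  thus "c \<in> L \<and> L - {c} \<in> rect_ideals m n"
    using c rect_ideal_subset_cells[OF L] by (auto simp: removable_def rect_ideals_def)
qed

definition weight_balance :: "nat \<Rightarrow> nat \<Rightarrow> (nat \<times> nat) set \<Rightarrow> real" where
  "weight_balance m n L =
     (\<Sum>c\<in>cells m n. (of_bool (addable L c) - of_bool (removable L c)) * cell_weight m n c)"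

lemma add_remove_commute_in_rect_ideals:
  assumes L: "L \<in> rect_ideals m n" and "a \<noteq> b"
  shows "(a \<notin> L \<and> insert a L \<in> rect_ideals m n \<and> b \<in> insert a L \<and> insert a L - {b} \<in> rect_ideals m n) \<longleftrightarrow>
         (b \<in> L \<and> L - {b} \<in> rect_ideals m n \<and> a \<notin> L - {b} \<and> insert a (L - {b}) \<in> rect_ideals m n)"
proof
  assume h: "a \<notin> L \<and> insert a L \<in> rect_ideals m n \<and> b \<in> insert a L \<and> insert a L - {b} \<in> rect_ideals m n"
  hence "L \<inter> (insert a L - {b}) \<in> rect_ideals m n"
    using rect_ideals_Int[OF L] by blast
  moreover have "L \<inter> (insert a L - {b}) = L - {b}"
    using h by auto
  ultimately show "b \<in> L \<and> L - {b} \<in> rect_ideals m n \<and> a \<notin> L - {b} \<and> insert a (L - {b}) \<in> rect_ideals m n"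
    using h assms(2) by (auto simp: insert_Diff_if)
next
  assume h: "b \<in> L \<and> L - {b} \<in> rect_ideals m n \<and> a \<notin> L - {b} \<and> insert a (L - {b}) \<in> rect_ideals m n"
  hence "L \<union> insert a (L - {b}) \<in> rect_ideals m n"
    using rect_ideals_Un[OF L] by blast
  moreover have "L \<union> insert a (L - {b}) = insert a L"
    using h by auto
  ultimately show "a \<notin> L \<and> insert a L \<in> rect_ideals m n \<and> b \<in> insert a L \<and> insert a L - {b} \<in> rect_ideals m n"
    using h assms(2) by (auto simp: insert_Diff_if)
qed

text \<open>The terms of DU and UD that add one cell and remove a different one agree, because ideals
  are closed under intersection and union; only the diagonal terms survive.\<close>

lemma down_up_commutator_weight_balance:
  assumes L: "L \<in> rect_ideals m n"
  shows "down_op m n (up_op m n y) L = up_op m n (down_op m n y) L + weight_balance m n L * y L"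
proof -
  let ?X = "rect_ideals m n" and ?w = "cell_weight m n" and ?C = "cells m n"
  define F where "F a b = (if a \<notin> L \<and> insert a L \<in> ?X \<and> b \<in> insert a L \<and> insert a L - {b} \<in> ?X
      then ?w a * y (insert a L - {b}) else 0)" for a b
  define G where "G a b = (if b \<in> L \<and> L - {b} \<in> ?X \<and> a \<notin> L - {b} \<and> insert a (L - {b}) \<in> ?X
      then ?w a * y (insert a (L - {b})) else 0)" for a b
  have off_diagonal: "F a b = G a b" if "a \<noteq> b" for a b
    using add_remove_commute_in_rect_ideals[OF L that] that by (auto simp: F_def G_def insert_Diff_if)
  have diagonal: "F a a - G a a = (of_bool (addable L a) - of_bool (removable L a)) * ?w a * y L"
    if "a \<in> ?C" for a
    using that insert_in_rect_ideals_iff[OF L, of a] remove_in_rect_ideals_iff[OF L, of a] L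
    by (auto simp: F_def G_def insert_absorb left_diff_distrib)
  have "(\<Sum>b\<in>?C. F a b) - (\<Sum>b\<in>?C. G a b) = F a a - G a a" if "a \<in> ?C" for a
  proof -
    have "(\<Sum>b\<in>?C - {a}. F a b) = (\<Sum>b\<in>?C - {a}. G a b)"
      by (rule sum.cong) (auto intro: off_diagonal)
    thus ?thesis
      using that by (simp add: sum.remove)
  qed
  hence "(\<Sum>a\<in>?C. \<Sum>b\<in>?C. F a b) - (\<Sum>a\<in>?C. \<Sum>b\<in>?C. G a b) = weight_balance m n L * y L"
    by (simp add: weight_balance_def diagonal sum_distrib_right flip: sum_subtractf)
  moreover have "down_op m n (up_op m n y) L = (\<Sum>a\<in>?C. \<Sum>b\<in>?C. F a b)"
    unfolding down_op_def up_op_def F_def by (rule sum.cong) (auto simp: sum_distrib_left intro!: sum.cong)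
  moreover have "up_op m n (down_op m n y) L = (\<Sum>a\<in>?C. \<Sum>b\<in>?C. G a b)"
    unfolding down_op_def up_op_def G_def by (subst sum.swap) (rule sum.cong, auto intro!: sum.cong)
  ultimately show ?thesis
    by simp
qed

lemma balance_change_insert:
  assumes "addable L (i, j)" "(Suc i, j) \<notin> L" "(i, Suc j) \<notin> L"
  shows "(of_bool (addable (insert (i, j) L) c) - of_bool (removable (insert (i, j) L) c) :: real) -
           (of_bool (addable L c) - of_bool (removable L c)) =
         - 2 * of_bool (c = (i, j))
         + of_bool (c = (Suc i, j) \<and> (j = 0 \<or> (Suc i, j - 1) \<in> L))
         + of_bool (c = (i, Suc j) \<and> (i = 0 \<or> (i - 1, Suc j) \<in> L))
         + of_bool (c = (i - 1, j) \<and> 0 < i \<and> (i - 1, Suc j) \<notin> L)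
         + of_bool (c = (i, j - 1) \<and> 0 < j \<and> (Suc i, j - 1) \<notin> L)"
proof -
  obtain p q where c: "c = (p, q)" by fastforce
  consider "c = (i, j)" | "c = (Suc i, j)" | "c = (i, Suc j)" | "0 < i \<and> c = (i - 1, j)"
    | "0 < j \<and> c = (i, j - 1)"
    | "c \<noteq> (i, j) \<and> c \<noteq> (Suc i, j) \<and> c \<noteq> (i, Suc j) \<and> \<not> (0 < i \<and> c = (i - 1, j)) \<and> \<not> (0 < j \<and> c = (i, j - 1))"
    by blast
  thus ?thesis
  proof cases
    case 6
    have "addable (insert (i, j) L) c = addable L c"
      using 6 c by (cases p; cases q) (auto simp: addable_def)
    moreover have "removable (insert (i, j) L) c = removable L c"
      using 6 c by (auto simp: removable_def)
    ultimately show ?thesis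
      using 6 by auto
  qed (use assms in \<open>auto simp: addable_def removable_def\<close>)
qed

text \<open>When (i, j) is added, the cells of content one larger whose status changes are (i, j + 1)
  and (i - 1, j); exactly one of them contributes its weight, or none at the boundary, where the
  weight vanishes anyway.\<close>

lemma weight_change_content_succ:
  assumes L: "L \<in> rect_ideals m n" and ij: "(i, j) \<in> cells m n"
  shows "of_bool ((i, Suc j) \<in> cells m n \<and> (i = 0 \<or> (i - 1, Suc j) \<in> L)) * cell_weight m n (i, Suc j)
      + of_bool ((i - 1, j) \<in> cells m n \<and> 0 < i \<and> (i - 1, Suc j) \<notin> L) * cell_weight m n (i - 1, j)
    = content_weight m n (cell_content (i, j) + 1)"
proof (cases "i = 0")
  case True
  show ?thesis
  proof (cases "Suc j < n")
    case False
    hence "n = Suc j"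
      using ij by (simp add: cells_def)
    thus ?thesis
      using True by (simp add: cells_def cell_content_def content_weight_def)
  qed (use True ij in \<open>auto simp: cell_weight_def content_weight_def cells_def cell_content_def algebra_simps\<close>)
next
  case False
  have "Suc j < n" if "(i - 1, Suc j) \<in> L"
    using that rect_ideal_subset_cells[OF L] by (auto simp: cells_def)
  thus ?thesis
    using False ij by (auto simp: cell_weight_def cells_def cell_content_def of_nat_diff algebra_simps)
qed

lemma weight_change_content_pred:
  assumes L: "L \<in> rect_ideals m n" and ij: "(i, j) \<in> cells m n"
  shows "of_bool ((Suc i, j) \<in> cells m n \<and> (j = 0 \<or> (Suc i, j - 1) \<in> L)) * cell_weight m n (Suc i, j)
      + of_bool ((i, j - 1) \<in> cells m n \<and> 0 < j \<and> (Suc i, j - 1) \<notin> L) * cell_weight m n (i, j - 1)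
    = content_weight m n (cell_content (i, j) - 1)"
proof (cases "j = 0")
  case True
  show ?thesis
  proof (cases "Suc i < m")
    case False
    hence "m = Suc i"
      using ij by (simp add: cells_def)
    thus ?thesis
      using True by (simp add: cells_def cell_content_def content_weight_def)
  qed (use True ij in \<open>auto simp: cell_weight_def content_weight_def cells_def cell_content_def algebra_simps\<close>)
next
  case False
  have "Suc i < m" if "(Suc i, j - 1) \<in> L"
    using that rect_ideal_subset_cells[OF L] by (auto simp: cells_def)
  thus ?thesis
    using False ij by (auto simp: cell_weight_def cells_def cell_content_def of_nat_diff algebra_simps)
qed

lemma weight_balance_insert:
  assumes L: "L \<in> rect_ideals m n" and ij: "(i, j) \<in> cells m n" "addable L (i, j)"
  shows "weight_balance m n (insert (i, j) L) = weight_balance m n L - 2"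
proof -
  let ?C = "cells m n" and ?w = "cell_weight m n" and ?q = "content_weight m n" and ?t = "cell_content (i, j)"
  have not_in_L: "(Suc i, j) \<notin> L" "(i, Suc j) \<notin> L"
    using ij(2) rect_ideal_down_closed[OF L, of "Suc i" j i j] rect_ideal_down_closed[OF L, of i "Suc j" i j]
    by (auto simp: addable_def)
  have "weight_balance m n (insert (i, j) L) - weight_balance m n L =
      (\<Sum>c\<in>?C. (- 2 * of_bool (c = (i, j))
         + of_bool (c = (Suc i, j) \<and> (j = 0 \<or> (Suc i, j - 1) \<in> L))
         + of_bool (c = (i, Suc j) \<and> (i = 0 \<or> (i - 1, Suc j) \<in> L))
         + of_bool (c = (i - 1, j) \<and> 0 < i \<and> (i - 1, Suc j) \<notin> L)
         + of_bool (c = (i, j - 1) \<and> 0 < j \<and> (Suc i, j - 1) \<notin> L)) * ?w c)"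
    unfolding weight_balance_def sum_subtractf[symmetric] left_diff_distrib[symmetric]
    using balance_change_insert[OF ij(2) not_in_L] by simp
  also have "\<dots> = - 2 * (\<Sum>c\<in>?C. of_bool (c = (i, j)) * ?w c)
         + (\<Sum>c\<in>?C. of_bool (c = (Suc i, j) \<and> (j = 0 \<or> (Suc i, j - 1) \<in> L)) * ?w c)
         + (\<Sum>c\<in>?C. of_bool (c = (i, Suc j) \<and> (i = 0 \<or> (i - 1, Suc j) \<in> L)) * ?w c)
         + (\<Sum>c\<in>?C. of_bool (c = (i - 1, j) \<and> 0 < i \<and> (i - 1, Suc j) \<notin> L) * ?w c)
         + (\<Sum>c\<in>?C. of_bool (c = (i, j - 1) \<and> 0 < j \<and> (Suc i, j - 1) \<notin> L) * ?w c)"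
    by (simp only: distrib_right sum.distrib sum_distrib_left mult.assoc)
  also have "\<dots> = - 2 * ?q ?t + ?q (?t + 1) + ?q (?t - 1)"
    using ij(1) weight_change_content_succ[OF L ij(1)] weight_change_content_pred[OF L ij(1)]
    by (simp only: sum_of_bool_conj_eq sum_of_bool_conj_eq[where Q = True, simplified] finite_cells)
       (simp add: cell_weight_def)
  also have "\<dots> = - 2"
    by (simp add: content_weight_def algebra_simps)
  finally show ?thesis
    by simp
qed

lemma weight_balance_empty: "weight_balance m n {} = real (m * n)"
proof -
  have "weight_balance m n {} = (\<Sum>c\<in>cells m n. of_bool (c = (0, 0) \<and> True) * cell_weight m n c)"
    unfolding weight_balance_def by (rule sum.cong) (auto simp: addable_def removable_def)
  also have "\<dots> = real (m * n)"
    by (cases "m = 0 \<or> n = 0")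
      (auto simp: sum_of_bool_conj_eq cells_def cell_weight_def content_weight_def cell_content_def)
  finally show ?thesis .
qed

lemma weight_balance_eq:
  "L \<in> rect_ideals m n \<Longrightarrow> weight_balance m n L = real (m * n) - 2 * real (card L)"
proof (induction "card L" arbitrary: L)
  case 0
  hence "L = {}"
    using finite_rect_ideal by auto
  thus ?case
    by (simp add: weight_balance_empty)
next
  case (Suc k)
  have fin: "finite L" and "L \<noteq> {}"
    using Suc finite_rect_ideal by auto
  define h where "h c = fst c + snd c" for c :: "nat \<times> nat"
  have "Max (h ` L) \<in> h ` L"
    using fin \<open>L \<noteq> {}\<close> by simp
  then obtain a where a_max: "Max (h ` L) = h a" and a: "a \<in> L"
    by (rule imageE)
  have le: "h b \<le> h a" if "b \<in> L" for b
    using Max_ge[of "h ` L" "h b"] fin that a_max by simp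
  have "removable L a"
    using a le[of "(Suc (fst a), snd a)"] le[of "(fst a, Suc (snd a))"] by (auto simp: removable_def h_def)
  hence L': "L - {a} \<in> rect_ideals m n"
    using remove_in_rect_ideals_iff[OF Suc.prems] by blast
  have "a \<in> cells m n \<and> addable (L - {a}) a"
    using insert_in_rect_ideals_iff[OF L', of a] a Suc.prems by (simp add: insert_absorb)
  moreover have "card (L - {a}) = k"
    using Suc.hyps(2) a fin by simp
  ultimately show ?case
    using weight_balance_insert[OF L', of "fst a" "snd a"] Suc.hyps(1)[OF _ L'] Suc.hyps(2) a
    by (simp add: insert_absorb)
qed

lemma down_up_commutator:
  "L \<in> rect_ideals m n \<Longrightarrow>
     down_op m n (up_op m n y) L = up_op m n (down_op m n y) L + (real (m * n) - 2 * real (card L)) * y L"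
  by (simp add: down_up_commutator_weight_balance weight_balance_eq)

text \<open>With the adjointness, 0 = <DUy, y> = |Dy|^2 + (mn - 2k) |y|^2 in the inner product weighted
  by the positive ideal weights.\<close>

lemma up_op_injective:
  assumes k: "2 * k < m * n"
    and supp: "\<And>S. S \<in> rect_ideals m n \<Longrightarrow> card S \<noteq> k \<Longrightarrow> y S = 0"
    and up_zero: "\<And>M. M \<in> rect_ideals m n \<Longrightarrow> up_op m n y M = 0"
    and S: "S \<in> rect_ideals m n"
  shows "y S = 0"
proof -
  let ?X = "rect_ideals m n" and ?w = "ideal_weight m n" and ?c = "real (m * n) - 2 * real k"
  have "down_op m n (up_op m n y) L = 0" for L
    unfolding down_op_def using up_zero by (intro sum.neutral) auto
  hence eigen: "up_op m n (down_op m n y) L = - ?c * y L" if "L \<in> ?X" for L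
    using down_up_commutator[OF that, of y] supp[OF that] by (cases "card L = k") (auto simp: algebra_simps)
  have "(\<Sum>L\<in>?X. ?w L * down_op m n y L * down_op m n y L) =
        (\<Sum>L\<in>?X. ?w L * up_op m n (down_op m n y) L * y L)"
    by (rule up_down_adjoint[symmetric])
  also have "\<dots> = - ?c * (\<Sum>L\<in>?X. ?w L * y L * y L)"
    by (simp add: eigen sum_distrib_left mult_ac)
  finally have balance: "(\<Sum>L\<in>?X. ?w L * down_op m n y L * down_op m n y L) + ?c * (\<Sum>L\<in>?X. ?w L * y L * y L) = 0"
    by (simp add: algebra_simps)
  have nonneg: "0 \<le> ?w L * b * b" if "L \<in> ?X" for L b
    using ideal_weight_pos[OF that] by (simp add: mult.assoc)
  have "0 < ?c"
    using k by linarith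
  moreover have "0 \<le> (\<Sum>L\<in>?X. ?w L * down_op m n y L * down_op m n y L)"
    and "0 \<le> (\<Sum>L\<in>?X. ?w L * y L * y L)"
    by (intro sum_nonneg nonneg; assumption)+
  ultimately have "(\<Sum>L\<in>?X. ?w L * y L * y L) = 0"
    using balance by (simp add: add_nonneg_eq_0_iff)
  hence "?w S * y S * y S = 0"
    using nonneg S by (simp add: sum_nonneg_eq_0_iff)
  thus "y S = 0"
    using ideal_weight_pos[OF S] by simp
qed

section \<open>Unimodality\<close>

lemma converse_in_rect_ideals: "S \<in> rect_ideals m n \<Longrightarrow> S\<inverse> \<in> rect_ideals n m"
  by (auto simp: rect_ideals_def down_closed_def cells_def)

lemma converse_in_asym_ideals: "S \<in> asym_ideals n k \<Longrightarrow> S\<inverse> \<in> asym_ideals n k"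
  by (auto simp: asym_ideals_def converse_in_rect_ideals sym_conv_converse_eq)

lemma converse_neq_asym_ideal: "S \<in> asym_ideals n k \<Longrightarrow> S\<inverse> \<noteq> S"
  by (auto simp: asym_ideals_def sym_conv_converse_eq)

lemma up_op_linear:
  "up_op m n (\<lambda>S. \<Sum>a\<in>A. x a * f a S) M = (\<Sum>a\<in>A. x a * up_op m n (f a) M)"
  unfolding up_op_def sum_distrib_left by (subst sum.swap) (auto intro!: sum.cong)

lemma up_op_converse: "up_op n n y (M\<inverse>) = up_op n n (\<lambda>S. y (S\<inverse>)) M"
  unfolding up_op_def
proof (rule sum.reindex_bij_witness[where i = prod.swap and j = prod.swap])
  fix c assume "c \<in> cells n n"
  have diff: "(M - {prod.swap c})\<inverse> = M\<inverse> - {c}"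
    by (cases c) auto
  hence "M - {prod.swap c} \<in> rect_ideals n n \<longleftrightarrow> M\<inverse> - {c} \<in> rect_ideals n n"
    by (metis converse_converse converse_in_rect_ideals)
  thus "(if prod.swap c \<in> M \<and> M - {prod.swap c} \<in> rect_ideals n n then y ((M - {prod.swap c})\<inverse>) else 0) =
      (if c \<in> M\<inverse> \<and> M\<inverse> - {c} \<in> rect_ideals n n then y (M\<inverse> - {c}) else 0)"
    using diff by (cases c) auto
qed (auto simp: cells_def)

lemma up_op_injective_on_antisymmetric:
  assumes k: "2 * k < n * n"
    and antisym: "\<And>S. y (S\<inverse>) = - y S"
    and supp: "\<And>S. y S \<noteq> 0 \<Longrightarrow> card S = k"
    and reps: "asym_ideals n (Suc k) \<subseteq> R \<union> converse ` R"
    and up_zero: "\<And>M. M \<in> R \<Longrightarrow> up_op n n y M = 0"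
    and S: "S \<in> rect_ideals n n"
  shows "y S = 0"
proof (rule up_op_injective[OF k _ _ S])
  have up_antisym: "up_op n n y (M\<inverse>) = - up_op n n y M" for M
    unfolding up_op_converse antisym by (simp add: up_op_def sum_negf[symmetric] if_distrib cong: if_cong)
  fix M assume M: "M \<in> rect_ideals n n"
  show "up_op n n y M = 0"
  proof (cases "card M = Suc k")
    case False
    have "y (M - {c}) = 0" if "c \<in> M" for c
      using supp[of "M - {c}"] False card_Suc_Diff1[OF finite_rect_ideal[OF M] that] by auto
    thus ?thesis
      by (auto simp: up_op_def intro!: sum.neutral)
  next
    case True
    show ?thesis
    proof (cases "sym M")
      case True
      thus ?thesis
        using up_antisym[of M] by (simp add: sym_conv_converse_eq)
    next
      case False
      hence "M \<in> R \<union> converse ` R"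
        using M \<open>card M = Suc k\<close> reps by (auto simp: asym_ideals_def)
      thus ?thesis
        using up_zero up_antisym by auto
    qed
  qed
qed (use supp in blast)

text \<open>For a in a set of representatives of the transposition orbits on the non-symmetric ideals
  of size k, these functions form a basis of the antisymmetric functions of rank k.\<close>

definition antisym_indicator :: "(nat \<times> nat) set \<Rightarrow> (nat \<times> nat) set \<Rightarrow> real" where
  "antisym_indicator a S = of_bool (S = a) - of_bool (S = a\<inverse>)"

lemma antisym_combination_support:
  assumes "H \<subseteq> asym_ideals n k" and "(\<Sum>a\<in>H. x a * antisym_indicator a S) \<noteq> 0"
  shows "card S = k"
proof -
  obtain a where "a \<in> H" "x a * antisym_indicator a S \<noteq> 0"
    using assms(2) by (meson sum.neutral)
  hence "antisym_indicator a S \<noteq> 0"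
    by simp
  hence "S = a \<or> S = a\<inverse>"
    unfolding antisym_indicator_def by (cases "S = a") simp_all
  moreover have "card a = k"
    using assms(1) \<open>a \<in> H\<close> by (auto simp: asym_ideals_def)
  ultimately show ?thesis
    by (elim disjE) simp_all
qed

lemma card_asym_ideals_mono:
  assumes k: "2 * k < n * n"
  shows "card (asym_ideals n k) \<le> card (asym_ideals n (Suc k))"
proof -
  obtain H where H: "H \<subseteq> asym_ideals n k" "asym_ideals n k = H \<union> converse ` H" "H \<inter> converse ` H = {}"
    using fixpoint_free_involution_split[of "asym_ideals n k" converse]
    by (auto simp: converse_in_asym_ideals converse_neq_asym_ideal)
  obtain H' where H': "H' \<subseteq> asym_ideals n (Suc k)"
      "asym_ideals n (Suc k) = H' \<union> converse ` H'" "H' \<inter> converse ` H' = {}"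
    using fixpoint_free_involution_split[of "asym_ideals n (Suc k)" converse]
    by (auto simp: converse_in_asym_ideals converse_neq_asym_ideal)
  have fin: "finite H" "finite H'"
    using H(1) H'(1) by (simp_all add: finite_subset)
  have "card H \<le> card H'"
  proof (rule card_le_card_if_kernel_trivial[where M = "\<lambda>b a. up_op n n (antisym_indicator a) b", OF fin(1) _ fin(2)])
    fix x a0 assume kernel: "\<And>b. b \<in> H' \<Longrightarrow> (\<Sum>a\<in>H. up_op n n (antisym_indicator a) b * x a) = 0"
      and a0: "a0 \<in> H"
    define y where "y S = (\<Sum>a\<in>H. x a * antisym_indicator a S)" for S
    have "y S = 0" if "S \<in> rect_ideals n n" for S
    proof (rule up_op_injective_on_antisymmetric[OF k _ _ _ _ that])
      show "y (S\<inverse>) = - y S" for S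
        unfolding y_def sum_negf[symmetric] by (rule sum.cong) (auto simp: antisym_indicator_def)
      show "card S = k" if "y S \<noteq> 0" for S
        using antisym_combination_support[OF H(1)] that by (simp add: y_def)
      show "up_op n n y M = 0" if "M \<in> H'" for M
        using kernel[OF that] unfolding y_def up_op_linear by (simp add: mult.commute)
    qed (use H'(2) in simp)
    moreover have "antisym_indicator a a0 = of_bool (a = a0)" if "a \<in> H" for a
      using H(3) that a0 by (auto simp: antisym_indicator_def)
    hence "y a0 = x a0"
      using a0 fin(1) by (simp add: y_def if_distrib cong: sum.cong)
    ultimately show "x a0 = 0"
      using a0 H(1) by (auto simp: asym_ideals_def)
  qed
  moreover have "card (asym_ideals n k) = 2 * card H" "card (asym_ideals n (Suc k)) = 2 * card H'"
    unfolding H(2) H'(2) using fin H(3) H'(3)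
    by (simp_all add: card_fixpoint_free_involution_split)
  ultimately show ?thesis
    by simp
qed

lemma card_asym_ideals_antimono:
  assumes "n * n < 2 * Suc k" "Suc k \<le> n * n"
  shows "card (asym_ideals n (Suc k)) \<le> card (asym_ideals n k)"
proof -
  have "card (asym_ideals n (n * n - Suc k)) \<le> card (asym_ideals n (Suc (n * n - Suc k)))"
    using assms by (intro card_asym_ideals_mono) presburger
  moreover have "Suc (n * n - Suc k) = n * n - k"
    using assms(2) by simp
  ultimately show ?thesis
    using assms card_asym_ideals_symmetric[of k n] card_asym_ideals_symmetric[of "Suc k" n] by simp
qed

theorem theorem4p1:
  fixes n :: nat
  assumes "n \<ge> 1"
  defines "P \<equiv> gauss_binom_2n_n n - odd_dist_prod n"
  shows "degree P \<le> n^2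
    \<and> (\<forall>k\<le>n^2. coeff P k = coeff P (n^2 - k))
    \<and> (\<forall>k. k + 1 \<le> n^2 div 2 \<longrightarrow> coeff P k \<le> coeff P (k + 1))
    \<and> (\<forall>k. n^2 div 2 \<le> k \<and> k + 1 \<le> n^2 \<longrightarrow> coeff P k \<ge> coeff P (k + 1))"
proof -
  have coeff_P: "coeff P k = int (card (asym_ideals n k))" for k
    unfolding P_def by (rule coeff_gauss_binom_minus_odd_dist_prod)
  have square: "n^2 = n * n"
    by (simp add: power2_eq_square)
  have below_middle: "2 * k < n * n" if "k + 1 \<le> n * n div 2" for k
    using that by presburger
  have above_middle: "n * n < 2 * Suc k" if "n * n div 2 \<le> k" for k
    using that by presburger
  have "degree P \<le> n^2"
    by (rule degree_le) (auto simp: coeff_P square asym_ideals_empty)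
  moreover have "coeff P k = coeff P (n^2 - k)" if "k \<le> n^2" for k
    using card_asym_ideals_symmetric[of k n] that by (simp add: coeff_P square)
  moreover have "coeff P k \<le> coeff P (k + 1)" if "k + 1 \<le> n^2 div 2" for k
    using card_asym_ideals_mono[OF below_middle] that by (simp add: coeff_P square)
  moreover have "coeff P (k + 1) \<le> coeff P k" if "n^2 div 2 \<le> k" "k + 1 \<le> n^2" for k
    using card_asym_ideals_antimono[OF above_middle] that by (simp add: coeff_P square)
  ultimately show ?thesis
    by blast
qed

end
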